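(* Let $p$ be a real polynomial with $\lim_{|x|\to\infty}p(x)=\infty$. (1) Suppose $p'$ is positive and increasing on an interval $(x_0,x_f)$, where $x_f$ may be $+\infty$, and, if $x_f<\infty$, that $p(x_f)\ge p(x_0)+1$. Then $\int_{x_0}^{x_f}e^{-p(x)}\,dx\approx e^{-p(x_0)}\,|\{x\in(x_0,x_f):p(x_0)<p(x)<p(x_0)+1\}|$. (2) Suppose $p'$ is negative and increasing on an interval $(x_f,x_0)$, where $x_f$ may be $-\infty$, and, if $x_f>-\infty$, that $p(x_f)\ge p(x_0)+1$. Then $\int_{x_f}^{x_0}e^{-p(x)}\,dx\approx e^{-p(x_0)}\,|\{x\in(x_f,x_0):p(x_0)<p(x)<p(x_0)+1\}|$. (3) Suppose $p'$ is either (i) positive and increasing on $I=(x_0,x_f)$ with $x_f<\infty$, or (ii) negative and increasing on $I=(x_f,x_0)$ with $x_f>-\infty$, and suppose $p(x_0)<p(x_f)<p(x_0)+1$. Then $\int_Ie^{-p(x)}\,dx\approx e^{-p(x_0)}|x_f-x_0|$.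
   Context: $X\approx Y$ means there is an absolute constant $c>0$ (independent of $p$ and of the interval) with $cY\le X\le c^{-1}Y$; $|E|$ denotes Lebesgue measure. *)

theory Defs
  imports "HOL-Analysis.Analysis" "HOL-Computational_Algebra.Polynomial"
begin

definition approx_with :: "real \<Rightarrow> real \<Rightarrow> real \<Rightarrow> bool" where
  "approx_with c X Y \<longleftrightarrow> c * Y \<le> X \<and> X \<le> Y / c"

end

theory Submission
  imports Defs
begin

text \<open>
  Let \<open>x1\<close> be the point where \<open>p\<close> first reaches \<open>p x0 + 1\<close>. On the strip \<open>(x0, x1)\<close> the
  integrand \<open>exp (- p)\<close> lies between \<open>exp (- p x0) / e\<close> and \<open>exp (- p x0)\<close>. Beyond \<open>x1\<close>, since
  \<open>p'\<close> is increasing it is at least the secant slope \<open>1 / (x1 - x0)\<close> of the strip, so \<open>p\<close> grows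
  at least linearly and the tail contributes at most \<open>exp (- p x0 - 1) (x1 - x0)\<close>. Hence
  \<open>c = 1 / e\<close> works, for any differentiable function with increasing derivative in place of \<open>p\<close>.
  The decreasing cases follow by the reflection \<open>x \<mapsto> - x\<close>; in case (3) there is no tail, and
  only the sign of \<open>p'\<close> is used.
\<close>

lemma set_integral_mono_set:
  fixes f :: "real \<Rightarrow> real"
  assumes "set_integrable lborel B f" "A \<in> sets lborel" "A \<subseteq> B" "\<And>x. x \<in> B \<Longrightarrow> 0 \<le> f x"
  shows "(LINT x:A|lborel. f x) \<le> (LINT x:B|lborel. f x)"
  using set_integrable_subset[OF assms(1-3)] assms(1,3,4)
  unfolding set_lebesgue_integral_def set_integrable_def
  by (intro integral_mono) (auto simp: indicator_def)

lemma measure_lborel_uminus_vimage: "measure lborel (uminus -` A) = measure lborel (A :: real set)"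
proof (cases "A \<in> sets lborel")
  case True
  then show ?thesis
    by (subst (2) lborel_distr_uminus[symmetric]) (simp add: measure_distr)
next
  case False
  have "uminus -` A \<notin> sets lborel"
  proof
    assume "uminus -` A \<in> sets lborel"
    then have "uminus -` (uminus -` A) \<inter> space lborel \<in> sets lborel"
      by (rule measurable_sets[rotated]) simp
    then show False using False by (simp add: vimage_def)
  qed
  with False show ?thesis by (simp add: measure_notin_sets)
qed

lemma set_integral_reflect:
  fixes g :: "real \<Rightarrow> real"
  shows "(LINT x:A|lborel. g x) = (LINT x:uminus -` A|lborel. g (- x))"
  unfolding set_lebesgue_integral_def
  using lborel_integral_real_affine[of "-1" "\<lambda>x. indicator A x *\<^sub>R g x" 0]
  by (simp add: indicator_def)

lemma set_integral_exp_neg_tail: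
  fixes c L :: real
  assumes "0 < L"
  shows "set_integrable lborel {c..} (\<lambda>x. exp (- (x - c) / L))"
    and "(LINT x:{c..}|lborel. exp (- (x - c) / L)) = L"
proof -
  have "((\<lambda>x. exp (c / L) * exp (- (1 / L) * x)) has_integral exp (c / L) * (exp (- (1 / L) * c) / (1 / L))) {c..}"
    using assms by (intro has_integral_mult_right has_integral_exp_minus_to_infinity) simp
  moreover have "exp (c / L) * exp (- (1 / L) * x) = exp (- (x - c) / L)" for x
    by (simp add: diff_divide_distrib flip: exp_add)
  moreover have "exp (c / L) * (exp (- (1 / L) * c) / (1 / L)) = L"
    by (simp add: field_simps flip: exp_add)
  ultimately have has_integral: "((\<lambda>x. exp (- (x - c) / L)) has_integral L) {c..}"
    by (metis (no_types, lifting) has_integral_cong)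
  then have "(\<lambda>x. exp (- (x - c) / L)) absolutely_integrable_on {c..}"
    by (intro nonnegative_absolutely_integrable_1) (auto simp: integrable_on_def)
  then show exp_integrable: "set_integrable lborel {c..} (\<lambda>x. exp (- (x - c) / L))"
    unfolding set_integrable_def by (subst (asm) integrable_completion) auto
  show "(LINT x:{c..}|lborel. exp (- (x - c) / L)) = L"
    unfolding set_borel_integral_eq_integral(2)[OF exp_integrable] by (rule integral_unique[OF has_integral])
qed

lemma set_integral_Ioo_bounds:
  fixes g :: "real \<Rightarrow> real"
  assumes "a < b" "continuous_on {a..b} g" "\<And>x. x \<in> {a<..<b} \<Longrightarrow> lo \<le> g x \<and> g x \<le> hi"
  shows "set_integrable lborel {a<..<b} g"
    and "lo * (b - a) \<le> (LINT x:{a<..<b}|lborel. g x)"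
    and "(LINT x:{a<..<b}|lborel. g x) \<le> hi * (b - a)"
proof -
  have integrable: "set_integrable lborel {a<..<b} h" if "continuous_on {a..b} h" for h :: "real \<Rightarrow> real"
    by (rule set_integrable_subset[OF borel_integrable_atLeastAtMost'[OF that]]) auto
  have const: "(LINT x:{a<..<b}|lborel. c) = c * (b - a)" for c :: real
    using assms(1) by (subst set_integral_const) auto
  show g: "set_integrable lborel {a<..<b} g"
    using integrable[OF assms(2)] .
  show "lo * (b - a) \<le> (LINT x:{a<..<b}|lborel. g x)"
    using set_integral_mono[OF integrable[OF continuous_on_const[of _ lo]] g] assms(3) const by auto
  show "(LINT x:{a<..<b}|lborel. g x) \<le> hi * (b - a)"
    using set_integral_mono[OF g integrable[OF continuous_on_const[of _ hi]]] assms(3) const by auto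
qed

lemma set_integral_exp_neg_tail_le:
  fixes f :: "real \<Rightarrow> real"
  assumes "continuous_on UNIV f" "B \<in> sets lborel" "B \<subseteq> {c..}" "0 < L"
    and above_line: "\<And>x. x \<in> B \<Longrightarrow> b + (x - c) / L \<le> f x"
  shows "set_integrable lborel B (\<lambda>x. exp (- f x))"
    and "(LINT x:B|lborel. exp (- f x)) \<le> exp (- b) * L"
proof -
  define h where "h = (\<lambda>x. exp (- b) * exp (- (x - c) / L))"
  have h: "set_integrable lborel {c..} h" "(LINT x:{c..}|lborel. h x) = exp (- b) * L"
    using set_integral_exp_neg_tail[OF \<open>0 < L\<close>, of c] by (simp_all add: h_def)
  have hB: "set_integrable lborel B h"
    using set_integrable_subset[OF h(1) assms(2,3)] .
  have le_h: "exp (- f x) \<le> h x" if "x \<in> B" for x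
    using above_line[OF that] by (simp add: h_def diff_divide_distrib flip: exp_add)
  have "continuous_on B (\<lambda>x. exp (- f x))"
    using continuous_on_subset[OF assms(1)] by (intro continuous_intros) auto
  then have "set_borel_measurable lborel B (\<lambda>x. exp (- f x))"
    unfolding set_borel_measurable_def
    using borel_measurable_continuous_on_indicator[OF _ \<open>continuous_on B _\<close>] assms(2) by simp
  then show gB: "set_integrable lborel B (\<lambda>x. exp (- f x))"
    using le_h by (intro set_integrable_bound[OF hB]) (auto simp: h_def)
  have "(LINT x:B|lborel. exp (- f x)) \<le> (LINT x:B|lborel. h x)"
    using set_integral_mono[OF gB hB le_h] .
  also have "\<dots> \<le> (LINT x:{c..}|lborel. h x)"
    using assms(2,3) by (intro set_integral_mono_set[OF h(1)]) (auto simp: h_def)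
  finally show "(LINT x:B|lborel. exp (- f x)) \<le> exp (- b) * L"
    using h(2) by simp
qed

lemma approx_integral_exp_neg_strip:
  fixes f :: "real \<Rightarrow> real"
  assumes "x0 < x1" "continuous_on UNIV f" "B \<in> sets lborel" "B \<subseteq> {x1..}"
    and strip: "\<And>x. x \<in> {x0<..<x1} \<Longrightarrow> a \<le> f x \<and> f x \<le> a + 1"
    and tail: "\<And>x. x \<in> B \<Longrightarrow> a + 1 + (x - x1) / (x1 - x0) \<le> f x"
  shows "approx_with (exp (-1)) (LINT x:{x0<..<x1} \<union> B|lborel. exp (- f x)) (exp (- a) * (x1 - x0))"
proof -
  have "0 < x1 - x0" using assms(1) by simp
  let ?I_strip = "LINT x:{x0<..<x1}|lborel. exp (- f x)" and ?I_tail = "LINT x:B|lborel. exp (- f x)"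
  define w where "w = exp (- a) * (x1 - x0)"
  have "0 \<le> w" using assms(1) by (simp add: w_def)
  have cont: "continuous_on {x0..x1} (\<lambda>x. exp (- f x))"
    using continuous_on_subset[OF assms(2)] by (intro continuous_intros) auto
  have "exp (-1) * exp (- a) \<le> exp (- f x) \<and> exp (- f x) \<le> exp (- a)" if "x \<in> {x0<..<x1}" for x
    using strip[OF that] by (simp flip: exp_add)
  note strip_integral = set_integral_Ioo_bounds[OF assms(1) cont this]
  have strip_integrable: "set_integrable lborel {x0<..<x1} (\<lambda>x. exp (- f x))"
    and strip_bounds: "exp (-1) * w \<le> ?I_strip" "?I_strip \<le> w"
    using strip_integral by (simp_all add: w_def mult_ac)
  have tail_integrable: "set_integrable lborel B (\<lambda>x. exp (- f x))"
    and "?I_tail \<le> exp (- (a + 1)) * (x1 - x0)"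
    using set_integral_exp_neg_tail_le[OF assms(2-4) \<open>0 < x1 - x0\<close> tail] by auto
  then have tail_bound: "?I_tail \<le> exp (-1) * w"
    by (simp add: w_def mult_ac add.commute flip: exp_add)
  have tail_nonneg: "0 \<le> ?I_tail"
    unfolding set_lebesgue_integral_def
    by (intro Bochner_Integration.integral_nonneg) (auto simp: indicator_def)
  have split: "(LINT x:{x0<..<x1} \<union> B|lborel. exp (- f x)) = ?I_strip + ?I_tail"
    using assms(4) by (intro set_integral_Un strip_integrable tail_integrable) auto
  have "?I_strip + ?I_tail \<le> (1 + exp (-1)) * w"
    using strip_bounds(2) tail_bound by (simp add: algebra_simps)
  also have "\<dots> \<le> exp 1 * w"
  proof (rule mult_right_mono[OF _ \<open>0 \<le> w\<close>])
    show "1 + exp (-1) \<le> exp (1::real)"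
      using exp_ge_add_one_self[of 1] exp_le_one_iff[of "-1"] by linarith
  qed
  also have "\<dots> = w / exp (-1)"
    by (simp add: exp_minus divide_inverse)
  finally show ?thesis
    unfolding approx_with_def split w_def[symmetric]
    using strip_bounds(1) tail_nonneg by simp
qed

lemma secant_slope_le_increment:
  fixes f f' :: "real \<Rightarrow> real"
  assumes deriv: "\<And>y. (f has_real_derivative f' y) (at y)"
    and mono: "mono_on {x0<..<x} f'" and "x0 < x1" "x1 \<le> x"
  shows "(x - x1) * ((f x1 - f x0) / (x1 - x0)) \<le> f x - f x1"
proof (cases "x1 = x")
  case False
  then have "x1 < x" using assms(4) by simp
  obtain \<xi>1 where \<xi>1: "x0 < \<xi>1" "\<xi>1 < x1" "f x1 - f x0 = (x1 - x0) * f' \<xi>1"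
    using MVT2[OF \<open>x0 < x1\<close>, of f f'] deriv by blast
  obtain \<xi>2 where \<xi>2: "x1 < \<xi>2" "\<xi>2 < x" "f x - f x1 = (x - x1) * f' \<xi>2"
    using MVT2[OF \<open>x1 < x\<close>, of f f'] deriv by blast
  have "f' \<xi>1 \<le> f' \<xi>2"
    using \<xi>1 \<xi>2 \<open>x1 < x\<close> by (intro mono_onD[OF mono]) auto
  then show ?thesis
    using \<xi>1 \<xi>2 \<open>x0 < x1\<close> \<open>x1 < x\<close> by (simp add: mult_left_mono)
qed simp

lemma DERIV_pos_imp_less:
  fixes f f' :: "real \<Rightarrow> real"
  assumes deriv: "\<And>x. (f has_real_derivative f' x) (at x)"
    and "u < v" and pos: "\<And>x. u < x \<Longrightarrow> x < v \<Longrightarrow> 0 < f' x"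
  shows "f u < f v"
proof (rule DERIV_pos_imp_increasing_open[OF \<open>u < v\<close>])
  show "continuous_on {u..v} f"
    using deriv by (rule has_real_derivative_imp_continuous_on)
qed (use deriv pos in blast)

lemma obtain_rise_by_one:
  fixes f :: "real \<Rightarrow> real" and xf :: ereal
  assumes "continuous_on UNIV f" "ereal x0 < xf"
    and finite_end: "\<And>r. xf = ereal r \<Longrightarrow> f x0 + 1 \<le> f r"
    and infinite_end: "xf = \<infinity> \<Longrightarrow> filterlim f at_top at_top"
  obtains x1 where "x0 < x1" "ereal x1 \<le> xf" "f x1 = f x0 + 1"
proof -
  obtain b where b: "x0 \<le> b" "ereal b \<le> xf" "f x0 + 1 \<le> f b"
  proof (cases xf)
    case (real r)
    then show ?thesis using that[of r] assms(2) finite_end by auto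
  next
    case PInf
    then obtain N where "\<And>x. N \<le> x \<Longrightarrow> f x0 + 1 \<le> f x"
      using infinite_end by (auto simp: filterlim_at_top eventually_at_top_linorder)
    then show ?thesis using PInf by (intro that[of "max N x0"]) auto
  qed (use assms(2) in simp)
  then obtain x1 where "x0 \<le> x1" "x1 \<le> b" "f x1 = f x0 + 1"
    using IVT'[of f x0 "f x0 + 1" b] continuous_on_subset[OF assms(1)] by auto
  moreover from this have "x0 \<noteq> x1" by auto
  ultimately show ?thesis
    using that b(2) by (meson ereal_less_eq(3) order.trans order_le_neq_trans)
qed

lemma level_strip_eq_Ioo:
  fixes f :: "real \<Rightarrow> real" and xf :: ereal
  assumes less: "\<And>u v. x0 \<le> u \<Longrightarrow> u < v \<Longrightarrow> ereal v \<le> xf \<Longrightarrow> f u < f v"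
    and "x0 < x1" "ereal x1 \<le> xf" "f x1 = f x0 + 1"
  shows "{x. ereal x0 < ereal x \<and> ereal x < xf \<and> f x0 < f x \<and> f x < f x0 + 1} = {x0<..<x1}"
proof (intro set_eqI iffI)
  fix x assume x: "x \<in> {x. ereal x0 < ereal x \<and> ereal x < xf \<and> f x0 < f x \<and> f x < f x0 + 1}"
  have "x < x1"
  proof (rule ccontr)
    assume "\<not> x < x1"
    then have "f x1 \<le> f x"
      using less[of x1 x] x \<open>x0 < x1\<close> by (cases "x = x1") (auto simp: less_imp_le)
    with x \<open>f x1 = f x0 + 1\<close> show False by simp
  qed
  with x show "x \<in> {x0<..<x1}" by simp
next
  fix x assume x: "x \<in> {x0<..<x1}"
  then have "ereal x < xf"
    using \<open>ereal x1 \<le> xf\<close> by (auto intro: less_le_trans[where y = "ereal x1"])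
  with x show "x \<in> {x. ereal x0 < ereal x \<and> ereal x < xf \<and> f x0 < f x \<and> f x < f x0 + 1}"
    using less[of x0 x] less[of x x1] \<open>ereal x1 \<le> xf\<close> \<open>f x1 = f x0 + 1\<close> by auto
qed

lemma DERIV_reflect:
  assumes "\<And>x. (f has_real_derivative f' x) (at x)"
  shows "((\<lambda>x. f (- x)) has_real_derivative - f' (- x)) (at x)"
  using DERIV_chain2[OF assms DERIV_minus[OF DERIV_ident]] by simp

lemma approx_integral_exp_neg_right:
  fixes f f' :: "real \<Rightarrow> real" and xf :: ereal
  assumes deriv: "\<And>x. (f has_real_derivative f' x) (at x)"
    and "ereal x0 < xf"
    and pos: "\<And>x. ereal x0 < ereal x \<Longrightarrow> ereal x < xf \<Longrightarrow> 0 < f' x"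
    and mono: "mono_on {x. ereal x0 < ereal x \<and> ereal x < xf} f'"
    and finite_end: "\<And>r. xf = ereal r \<Longrightarrow> f x0 + 1 \<le> f r"
    and infinite_end: "xf = \<infinity> \<Longrightarrow> filterlim f at_top at_top"
  shows "approx_with (exp (-1)) (LINT x:{x. ereal x0 < ereal x \<and> ereal x < xf}|lborel. exp (- f x))
           (exp (- f x0) * measure lborel
              {x. ereal x0 < ereal x \<and> ereal x < xf \<and> f x0 < f x \<and> f x < f x0 + 1})"
proof -
  have cont: "continuous_on UNIV f"
    using deriv by (rule has_real_derivative_imp_continuous_on)
  obtain x1 where x1: "x0 < x1" "ereal x1 \<le> xf" "f x1 = f x0 + 1"
    using obtain_rise_by_one[OF cont assms(2) finite_end infinite_end] .
  have less: "f u < f v" if "x0 \<le> u" "u < v" "ereal v \<le> xf" for u v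
    using that by (intro DERIV_pos_imp_less[OF deriv] pos) (auto intro: less_le_trans[where y = "ereal v"])
  have level_set: "{x. ereal x0 < ereal x \<and> ereal x < xf \<and> f x0 < f x \<and> f x < f x0 + 1} = {x0<..<x1}"
    using less x1 by (rule level_strip_eq_Ioo)
  have domain: "{x. ereal x0 < ereal x \<and> ereal x < xf} = {x0<..<x1} \<union> {x. x1 \<le> x \<and> ereal x < xf}"
    using \<open>x0 < x1\<close> \<open>ereal x1 \<le> xf\<close> by (auto intro: less_le_trans[where y = "ereal x1"])
  have "f x0 + 1 + (x - x1) / (x1 - x0) \<le> f x" if "x \<in> {x. x1 \<le> x \<and> ereal x < xf}" for x
  proof -
    have "mono_on {x0<..<x} f'"
      using that by (intro mono_on_subset[OF mono]) (auto intro: less_trans[where y = "ereal x"])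
    with secant_slope_le_increment[OF deriv this \<open>x0 < x1\<close>] show ?thesis
      using that \<open>f x1 = f x0 + 1\<close> by simp
  qed
  moreover have "f x0 \<le> f x \<and> f x \<le> f x0 + 1" if "x \<in> {x0<..<x1}" for x
    using that unfolding level_set[symmetric] by simp
  ultimately have "approx_with (exp (-1))
      (LINT x:{x0<..<x1} \<union> {x. x1 \<le> x \<and> ereal x < xf}|lborel. exp (- f x)) (exp (- f x0) * (x1 - x0))"
    using \<open>x0 < x1\<close> by (intro approx_integral_exp_neg_strip[OF _ cont]) auto
  then show ?thesis
    unfolding domain level_set using \<open>x0 < x1\<close> by simp
qed

lemma approx_integral_exp_neg_left:
  fixes f f' :: "real \<Rightarrow> real" and xf :: ereal
  assumes deriv: "\<And>x. (f has_real_derivative f' x) (at x)"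
    and "xf < ereal x0"
    and neg: "\<And>x. xf < ereal x \<Longrightarrow> ereal x < ereal x0 \<Longrightarrow> f' x < 0"
    and mono: "mono_on {x. xf < ereal x \<and> ereal x < ereal x0} f'"
    and finite_end: "\<And>r. xf = ereal r \<Longrightarrow> f x0 + 1 \<le> f r"
    and infinite_end: "xf = -\<infinity> \<Longrightarrow> filterlim f at_top at_bot"
  shows "approx_with (exp (-1)) (LINT x:{x. xf < ereal x \<and> ereal x < ereal x0}|lborel. exp (- f x))
           (exp (- f x0) * measure lborel
              {x. xf < ereal x \<and> ereal x < ereal x0 \<and> f x0 < f x \<and> f x < f x0 + 1})"
proof -
  have reflect: "ereal (- x0) < ereal x \<and> ereal x < - xf \<longleftrightarrow> xf < ereal (- x) \<and> ereal (- x) < ereal x0" for x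
    by (cases xf) auto
  have "((\<lambda>x. f (- x)) has_real_derivative - f' (- x)) (at x)" for x
    using deriv by (rule DERIV_reflect)
  moreover have "ereal (- x0) < - xf"
    using \<open>xf < ereal x0\<close> by (cases xf) auto
  moreover have "0 < - f' (- x)" if "ereal (- x0) < ereal x" "ereal x < - xf" for x
    using neg reflect[of x] that by auto
  moreover have "mono_on {x. ereal (- x0) < ereal x \<and> ereal x < - xf} (\<lambda>x. - f' (- x))"
  proof (rule mono_onI)
    fix r s assume "r \<in> {x. ereal (- x0) < ereal x \<and> ereal x < - xf}"
      "s \<in> {x. ereal (- x0) < ereal x \<and> ereal x < - xf}" "r \<le> s"
    then have "f' (- s) \<le> f' (- r)"
      using reflect[of r] reflect[of s] by (intro mono_onD[OF mono]) auto
    then show "- f' (- r) \<le> - f' (- s)" by simp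
  qed
  moreover have "f x0 + 1 \<le> f (- r)" if "- xf = ereal r" for r
    using finite_end[of "- r"] that by (cases xf) auto
  moreover have "filterlim (\<lambda>x. f (- x)) at_top at_top" if "- xf = \<infinity>"
  proof -
    have "xf = - \<infinity>" using that by (cases xf) auto
    then show ?thesis
      using infinite_end by (intro filterlim_compose[OF _ filterlim_uminus_at_bot_at_top])
  qed
  ultimately have "approx_with (exp (-1))
      (LINT x:{x. ereal (- x0) < ereal x \<and> ereal x < - xf}|lborel. exp (- f (- x)))
      (exp (- f x0) * measure lborel
         {x. ereal (- x0) < ereal x \<and> ereal x < - xf \<and> f x0 < f (- x) \<and> f (- x) < f x0 + 1})"
    by (rule approx_integral_exp_neg_right[of "\<lambda>x. f (- x)" _ "- x0", unfolded minus_minus])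
  moreover have "{x. ereal (- x0) < ereal x \<and> ereal x < - xf} = uminus -` {x. xf < ereal x \<and> ereal x < ereal x0}"
    using reflect by auto
  moreover have "{x. ereal (- x0) < ereal x \<and> ereal x < - xf \<and> f x0 < f (- x) \<and> f (- x) < f x0 + 1} =
      uminus -` {x. xf < ereal x \<and> ereal x < ereal x0 \<and> f x0 < f x \<and> f x < f x0 + 1}"
    using reflect by auto
  ultimately show ?thesis
    unfolding set_integral_reflect[of "{x. xf < ereal x \<and> ereal x < ereal x0}" "\<lambda>x. exp (- f x)"]
    by (simp only: measure_lborel_uminus_vimage)
qed

lemma approx_integral_exp_neg_short_right:
  fixes f f' :: "real \<Rightarrow> real"
  assumes deriv: "\<And>x. (f has_real_derivative f' x) (at x)"
    and "x0 < x1" and pos: "\<And>x. x0 < x \<Longrightarrow> x < x1 \<Longrightarrow> 0 < f' x" and "f x1 \<le> f x0 + 1"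
  shows "approx_with (exp (-1)) (LINT x:{x0<..<x1}|lborel. exp (- f x)) (exp (- f x0) * (x1 - x0))"
proof -
  have "f x0 \<le> f x \<and> f x \<le> f x0 + 1" if "x \<in> {x0<..<x1}" for x
    using that DERIV_pos_imp_less[OF deriv, of x0 x] DERIV_pos_imp_less[OF deriv, of x x1] pos \<open>f x1 \<le> f x0 + 1\<close>
    by force
  then show ?thesis
    using approx_integral_exp_neg_strip[of x0 x1 f "{}" "f x0"] \<open>x0 < x1\<close>
      has_real_derivative_imp_continuous_on[OF deriv]
    by simp
qed

lemma approx_integral_exp_neg_short_left:
  fixes f f' :: "real \<Rightarrow> real"
  assumes deriv: "\<And>x. (f has_real_derivative f' x) (at x)"
    and "x1 < x0" and neg: "\<And>x. x1 < x \<Longrightarrow> x < x0 \<Longrightarrow> f' x < 0" and "f x1 \<le> f x0 + 1"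
  shows "approx_with (exp (-1)) (LINT x:{x1<..<x0}|lborel. exp (- f x)) (exp (- f x0) * (x0 - x1))"
proof -
  have "approx_with (exp (-1)) (LINT x:{- x0<..<- x1}|lborel. exp (- f (- x))) (exp (- f x0) * (- x1 - - x0))"
    using \<open>x1 < x0\<close> neg \<open>f x1 \<le> f x0 + 1\<close>
    by (intro approx_integral_exp_neg_short_right[of "\<lambda>x. f (- x)" "\<lambda>x. - f' (- x)" "- x0",
          unfolded minus_minus] DERIV_reflect[OF deriv]) auto
  moreover have "{- x0<..<- x1} = uminus -` {x1<..<x0}"
    by auto
  ultimately show ?thesis
    unfolding set_integral_reflect[of "{x1<..<x0}" "\<lambda>x. exp (- f x)"] by simp
qed

theorem lemma4p4:
  shows
  "(\<exists>c>0. \<forall>(p::real poly) (x0::real) (xf::ereal).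
      filterlim (poly p) at_top at_infinity \<and> ereal x0 < xf \<and>
      (\<forall>x\<in>{x. ereal x0 < ereal x \<and> ereal x < xf}. poly (pderiv p) x > 0) \<and>
      mono_on {x. ereal x0 < ereal x \<and> ereal x < xf} (poly (pderiv p)) \<and>
      (\<forall>r. xf = ereal r \<longrightarrow> poly p r \<ge> poly p x0 + 1)
      \<longrightarrow> approx_with c
            (LINT x:{x. ereal x0 < ereal x \<and> ereal x < xf}|lborel. exp (- poly p x))
            (exp (- poly p x0) * measure lborel
               {x. ereal x0 < ereal x \<and> ereal x < xf \<and> poly p x0 < poly p x \<and> poly p x < poly p x0 + 1}))
   \<and>
   (\<exists>c>0. \<forall>(p::real poly) (x0::real) (xf::ereal).
      filterlim (poly p) at_top at_infinity \<and> xf < ereal x0 \<and>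
      (\<forall>x\<in>{x. xf < ereal x \<and> ereal x < ereal x0}. poly (pderiv p) x < 0) \<and>
      mono_on {x. xf < ereal x \<and> ereal x < ereal x0} (poly (pderiv p)) \<and>
      (\<forall>r. xf = ereal r \<longrightarrow> poly p r \<ge> poly p x0 + 1)
      \<longrightarrow> approx_with c
            (LINT x:{x. xf < ereal x \<and> ereal x < ereal x0}|lborel. exp (- poly p x))
            (exp (- poly p x0) * measure lborel
               {x. xf < ereal x \<and> ereal x < ereal x0 \<and> poly p x0 < poly p x \<and> poly p x < poly p x0 + 1}))
   \<and>
   (\<exists>c>0. \<forall>(p::real poly) (x0::real) (xf::real).
      filterlim (poly p) at_top at_infinity \<and>
      poly p x0 < poly p xf \<and> poly p xf < poly p x0 + 1
      \<longrightarrow> (x0 < xf \<and> (\<forall>x\<in>{x0<..<xf}. poly (pderiv p) x > 0) \<and>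
             mono_on {x0<..<xf} (poly (pderiv p))
             \<longrightarrow> approx_with c (LINT x:{x0<..<xf}|lborel. exp (- poly p x))
                   (exp (- poly p x0) * \<bar>xf - x0\<bar>)) \<and>
          (xf < x0 \<and> (\<forall>x\<in>{xf<..<x0}. poly (pderiv p) x < 0) \<and>
             mono_on {xf<..<x0} (poly (pderiv p))
             \<longrightarrow> approx_with c (LINT x:{xf<..<x0}|lborel. exp (- poly p x))
                   (exp (- poly p x0) * \<bar>xf - x0\<bar>)))"
  apply (intro conjI exI[of _ "exp (-1)"] allI impI; (elim conjE)?)
  subgoal by simp
  subgoal
    by (rule approx_integral_exp_neg_right[OF poly_DERIV])
      (auto intro: filterlim_mono[OF _ order_refl at_top_le_at_infinity])
  subgoal by simp
  subgoal
    by (rule approx_integral_exp_neg_left[OF poly_DERIV])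
      (auto intro: filterlim_mono[OF _ order_refl at_bot_le_at_infinity])
  subgoal by simp
  subgoal
    using approx_integral_exp_neg_short_right[OF poly_DERIV] by simp
  subgoal
    using approx_integral_exp_neg_short_left[OF poly_DERIV] by simp
  done

end
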